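(* Consider $G\ge 2$ treatment levels with potential outcomes $Y(1),\dots,Y(G)$, assignment indicators $\mathbf{W}=(W_1,\dots,W_G)$ (each $W_g\in\{0,1\}$, $W_1+\cdots+W_G=1$) with $\rho_g=\mathbb{P}(W_g=1)>0$ for all $g$, and a $1\times K$ covariate vector $\mathbf{X}$. Assume (random assignment) $\mathbf{W}$ is independent of $(Y(1),\dots,Y(G),\mathbf{X})$, (random sampling) $\{(\mathbf{W}_i,Y_i(1),\dots,Y_i(G),\mathbf{X}_i)\}_{i=1}^N$ are i.i.d. copies for a nonrandom integer $N$, and all $Y(g)$ and components of $\mathbf{X}$ have finite second moments. Let $Y_i=\sum_{g}W_{ig}Y_i(g)$ be the observed outcome, $N_g=\sum_{i=1}^N W_{ig}$, and $\bar Y_g=N_g^{-1}\sum_{i=1}^N W_{ig}Y_i$ the subsample mean, stacked into $\bar{\mathbf{Y}}=(\bar Y_1,\dots,\bar Y_G)'$, and let $\boldsymbol\mu=(\mu_1,\dots,\mu_G)'$. Then $$\sqrt{N}(\bar{\mathbf{Y}}-\boldsymbol\mu)=N^{-1/2}\sum_{i=1}^N(\mathbf{L}_i+\mathbf{Q}_i)+o_p(1),$$ where $\mathbf{L}_i$ is the $G\times1$ vector with $g$-th entry $W_{ig}\dot{\mathbf{X}}_i\boldsymbol\beta_g/\rho_g$ and $\mathbf{Q}_i$ is the $G\times 1$ vector with $g$-th entry $W_{ig}U_i(g)/\rho_g$.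
   Context: $\mu_g=\mathbb{E}[Y(g)]$, $\boldsymbol\mu_{\mathbf{X}}=\mathbb{E}(\mathbf{X})$, $\dot{\mathbf{X}}=\mathbf{X}-\boldsymbol\mu_{\mathbf{X}}$. For each $g$, $\boldsymbol\beta_g$ is the coefficient vector of the population linear projection of $Y(g)-\mu_g$ onto $\dot{\mathbf{X}}$, and $U(g)=Y(g)-\mu_g-\dot{\mathbf{X}}\boldsymbol\beta_g$, so that $\mathbb{E}[U(g)]=0$ and $\mathbb{E}[\dot{\mathbf{X}}'U(g)]=\mathbf{0}$. Subscript $i$ denotes the corresponding quantity for the $i$-th draw ($\dot{\mathbf{X}}_i=\mathbf{X}_i-\boldsymbol\mu_{\mathbf{X}}$, $U_i(g)=Y_i(g)-\mu_g-\dot{\mathbf{X}}_i\boldsymbol\beta_g$). *)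

theory Defs
  imports "HOL-Probability.Probability"
begin

definition op1 :: "'a measure \<Rightarrow> (nat \<Rightarrow> 'a \<Rightarrow> 'b::real_normed_vector) \<Rightarrow> bool" where
  "op1 M R \<longleftrightarrow> (\<forall>e>0. (\<lambda>N. measure M {\<omega> \<in> space M. norm (R N \<omega>) > e}) \<longlonglongrightarrow> 0)"

definition vec_expectation :: "'a measure \<Rightarrow> ('a \<Rightarrow> real ^ 'k) \<Rightarrow> real ^ 'k" where
  "vec_expectation M X = (\<chi> k. integral\<^sup>L M (\<lambda>\<omega>. X \<omega> $ k))"

definition is_lin_proj_coef :: "'a measure \<Rightarrow> ('a \<Rightarrow> real) \<Rightarrow> ('a \<Rightarrow> real ^ 'k) \<Rightarrow> real ^ 'k \<Rightarrow> bool" where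
  "is_lin_proj_coef M V D b \<longleftrightarrow>
     (\<forall>k. integral\<^sup>L M (\<lambda>\<omega>. D \<omega> $ k * (V \<omega> - D \<omega> \<bullet> b)) = 0)"

definition indep_rv :: "'a measure \<Rightarrow> ('a \<Rightarrow> 'b::topological_space) \<Rightarrow> ('a \<Rightarrow> 'c::topological_space) \<Rightarrow> bool" where
  "indep_rv M A B \<longleftrightarrow>
     A \<in> borel_measurable M \<and> B \<in> borel_measurable M \<and>
     (\<forall>S \<in> sets borel. \<forall>T \<in> sets borel.
        measure M {\<omega> \<in> space M. A \<omega> \<in> S \<and> B \<omega> \<in> T}
        = measure M {\<omega> \<in> space M. A \<omega> \<in> S} * measure M {\<omega> \<in> space M. B \<omega> \<in> T})"

end

theory Submission
  imports Defs
begin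

(*
  Fix a treatment level g and put V_i = W_ig (Y_i(g) - mu_g) and D_i = W_ig - rho_g.  Both
  sequences are i.i.d. and centred (V_i by random assignment), hence uncorrelated with
  bounded second moments, and N_g = sum D_i + N rho_g.  Since (L_i + Q_i)_g = V_i / rho_g
  identically, the coefficients beta_g cancel and the g-th remainder equals

    sqrt N * (sum V_i) / N_g - (sum V_i) / (sqrt N * rho_g)
      = - (sum V_i) (sum D_i) / (sqrt N * N_g * rho_g).

  By Chebyshev's inequality sum V_i = O_p(sqrt N) and sum D_i = o_p(N); on the event
  |sum V_i| <= K sqrt N, |sum D_i| <= delta N with delta <= rho_g / 2 the remainder is at
  most 2 K delta / rho_g^2.
*)

lemma
  fixes S D K \<delta> \<rho> n :: real
  assumes n: "n > 0" and \<rho>: "\<rho> > 0" and S: "\<bar>S\<bar> \<le> K * sqrt n" and D: "\<bar>D\<bar> \<le> \<delta> * n"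
    and \<delta>: "\<delta> \<le> \<rho> / 2"
  shows ratio_denominator_pos: "D + n * \<rho> > 0"
    and ratio_remainder_le: "\<bar>sqrt n * (S / (D + n * \<rho>)) - S / (sqrt n * \<rho>)\<bar> \<le> 2 * K * \<delta> / \<rho>\<^sup>2"
proof -
  define T where "T = D + n * \<rho>"
  have "\<delta> * n \<le> n * \<rho> / 2"
    using mult_right_mono[OF \<delta>, of n] n by (simp add: algebra_simps)
  then have T_ge: "n * \<rho> / 2 \<le> T"
    using D abs_ge_minus_self[of D] unfolding T_def by linarith
  moreover have "n * \<rho> / 2 > 0"
    using n \<rho> by simp
  ultimately have T_pos: "T > 0" by linarith
  then show "D + n * \<rho> > 0" unfolding T_def .
  have sqrt_n: "sqrt n > 0" using n by simp
  have "sqrt n * (S / T) - S / (sqrt n * \<rho>) = - (S * D) / (sqrt n * T * \<rho>)"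
    using sqrt_n \<rho> T_pos n by (simp add: T_def field_simps)
  then have "\<bar>sqrt n * (S / T) - S / (sqrt n * \<rho>)\<bar> = \<bar>S\<bar> * \<bar>D\<bar> / (sqrt n * T * \<rho>)"
    using sqrt_n T_pos \<rho> by (simp add: abs_mult)
  also have "\<dots> \<le> (K * sqrt n) * (\<delta> * n) / (sqrt n * (n * \<rho> / 2) * \<rho>)"
  proof (rule frac_le)
    show "\<bar>S\<bar> * \<bar>D\<bar> \<le> K * sqrt n * (\<delta> * n)"
      using S D by (intro mult_mono) auto
    then show "0 \<le> K * sqrt n * (\<delta> * n)"
      by (meson abs_ge_zero mult_nonneg_nonneg order_trans)
    show "0 < sqrt n * (n * \<rho> / 2) * \<rho>"
      using sqrt_n n \<rho> by simp
    show "sqrt n * (n * \<rho> / 2) * \<rho> \<le> sqrt n * T * \<rho>"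
      using T_ge sqrt_n \<rho> by (intro mult_right_mono mult_left_mono) auto
  qed
  also have "\<dots> = 2 * K * \<delta> / \<rho>\<^sup>2"
    using sqrt_n n \<rho> by (simp add: field_simps power2_eq_square)
  finally show "\<bar>sqrt n * (S / (D + n * \<rho>)) - S / (sqrt n * \<rho>)\<bar> \<le> 2 * K * \<delta> / \<rho>\<^sup>2"
    unfolding T_def .
qed

locale orthogonal_sequence = prob_space +
  fixes Z :: "nat \<Rightarrow> 'a \<Rightarrow> real" and C :: real
  assumes measurable_Z [measurable]: "\<And>i. Z i \<in> borel_measurable M"
    and integrable_square: "\<And>i. integrable M (\<lambda>\<omega>. (Z i \<omega>)\<^sup>2)"
    and orthogonal: "\<And>i j. i \<noteq> j \<Longrightarrow> (\<integral>\<omega>. Z i \<omega> * Z j \<omega> \<partial>M) = 0"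
    and second_moment_le: "\<And>i. (\<integral>\<omega>. (Z i \<omega>)\<^sup>2 \<partial>M) \<le> C"
begin

lemma second_moment_bound_nonneg: "C \<ge> 0"
proof -
  have "0 \<le> (\<integral>\<omega>. (Z 0 \<omega>)\<^sup>2 \<partial>M)"
    by (rule integral_nonneg_AE) simp
  then show ?thesis
    using second_moment_le[of 0] by linarith
qed

lemma integrable_product: "integrable M (\<lambda>\<omega>. Z i \<omega> * Z j \<omega>)"
proof (rule Bochner_Integration.integrable_bound)
  show "integrable M (\<lambda>\<omega>. (Z i \<omega>)\<^sup>2 + (Z j \<omega>)\<^sup>2)"
    using integrable_square by auto
  show "AE \<omega> in M. norm (Z i \<omega> * Z j \<omega>) \<le> norm ((Z i \<omega>)\<^sup>2 + (Z j \<omega>)\<^sup>2)"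
  proof (intro AE_I2)
    fix \<omega>
    have "\<bar>Z i \<omega>\<bar> * \<bar>Z j \<omega>\<bar> \<le> 2 * \<bar>Z i \<omega>\<bar> * \<bar>Z j \<omega>\<bar>"
      by simp
    also have "\<dots> \<le> (Z i \<omega>)\<^sup>2 + (Z j \<omega>)\<^sup>2"
      using sum_squares_bound[of "\<bar>Z i \<omega>\<bar>" "\<bar>Z j \<omega>\<bar>"] by simp
    finally show "norm (Z i \<omega> * Z j \<omega>) \<le> norm ((Z i \<omega>)\<^sup>2 + (Z j \<omega>)\<^sup>2)"
      by (simp add: abs_mult)
  qed
qed simp

lemma
  shows integrable_square_sum: "integrable M (\<lambda>\<omega>. (\<Sum>i<N. Z i \<omega>)\<^sup>2)"
    and second_moment_sum_le: "(\<integral>\<omega>. (\<Sum>i<N. Z i \<omega>)\<^sup>2 \<partial>M) \<le> real N * C"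
proof -
  have square_sum: "(\<Sum>i<N. Z i \<omega>)\<^sup>2 = (\<Sum>i<N. \<Sum>j<N. Z i \<omega> * Z j \<omega>)" for \<omega>
    by (simp add: power2_eq_square sum_product)
  show "integrable M (\<lambda>\<omega>. (\<Sum>i<N. Z i \<omega>)\<^sup>2)"
    unfolding square_sum using integrable_product by auto
  have "(\<integral>\<omega>. (\<Sum>i<N. Z i \<omega>)\<^sup>2 \<partial>M) = (\<Sum>i<N. \<Sum>j<N. \<integral>\<omega>. Z i \<omega> * Z j \<omega> \<partial>M)"
    unfolding square_sum using integrable_product by simp
  also have "\<dots> = (\<Sum>i<N. \<integral>\<omega>. (Z i \<omega>)\<^sup>2 \<partial>M)"
  proof (intro sum.cong refl)
    fix i assume "i \<in> {..<N}"
    then have "(\<Sum>j<N. \<integral>\<omega>. Z i \<omega> * Z j \<omega> \<partial>M) = (\<Sum>j\<in>{i}. \<integral>\<omega>. Z i \<omega> * Z j \<omega> \<partial>M)"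
      by (intro sum.mono_neutral_right) (auto simp: orthogonal)
    then show "(\<Sum>j<N. \<integral>\<omega>. Z i \<omega> * Z j \<omega> \<partial>M) = (\<integral>\<omega>. (Z i \<omega>)\<^sup>2 \<partial>M)"
      by (simp add: power2_eq_square)
  qed
  also have "\<dots> \<le> real N * C"
    using sum_mono[of "{..<N}" "\<lambda>i. \<integral>\<omega>. (Z i \<omega>)\<^sup>2 \<partial>M" "\<lambda>_. C"] second_moment_le by simp
  finally show "(\<integral>\<omega>. (\<Sum>i<N. Z i \<omega>)\<^sup>2 \<partial>M) \<le> real N * C" .
qed

lemma prob_abs_sum_gt_le:
  assumes t: "t > 0"
  shows "prob {\<omega> \<in> space M. t < \<bar>\<Sum>i<N. Z i \<omega>\<bar>} \<le> real N * C / t\<^sup>2"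
proof -
  have "prob {\<omega> \<in> space M. t < \<bar>\<Sum>i<N. Z i \<omega>\<bar>} \<le> prob {\<omega> \<in> space M. t\<^sup>2 \<le> (\<Sum>i<N. Z i \<omega>)\<^sup>2}"
    using t by (intro finite_measure_mono) (auto simp: abs_le_square_iff[symmetric])
  also have "\<dots> \<le> (\<integral>\<omega>. (\<Sum>i<N. Z i \<omega>)\<^sup>2 \<partial>M) / t\<^sup>2"
    using t by (intro integral_Markov_inequality_measure[OF integrable_square_sum]) auto
  also have "\<dots> \<le> real N * C / t\<^sup>2"
    using second_moment_sum_le by (simp add: divide_right_mono)
  finally show ?thesis .
qed

lemma sum_bounded_in_probability:
  assumes r: "r > 0"
  shows "\<exists>K>0. \<forall>N. prob {\<omega> \<in> space M. K * sqrt (real N) < \<bar>\<Sum>i<N. Z i \<omega>\<bar>} < r"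
proof (intro exI conjI allI)
  define K where "K = sqrt (C / r) + 1"
  show K_pos: "K > 0"
    unfolding K_def using second_moment_bound_nonneg r by (simp add: add_nonneg_pos)
  have "C / r = (sqrt (C / r))\<^sup>2"
    using second_moment_bound_nonneg r by simp
  also have "\<dots> < K\<^sup>2"
    unfolding K_def using second_moment_bound_nonneg r by (intro power_strict_mono) auto
  finally have C_lt: "C / K\<^sup>2 < r"
    using K_pos r by (simp add: field_simps)
  fix N
  show "prob {\<omega> \<in> space M. K * sqrt (real N) < \<bar>\<Sum>i<N. Z i \<omega>\<bar>} < r"
  proof (cases "N = 0")
    case True
    then show ?thesis using r by simp
  next
    case False
    then have "prob {\<omega> \<in> space M. K * sqrt (real N) < \<bar>\<Sum>i<N. Z i \<omega>\<bar>} \<le> real N * C / (K * sqrt (real N))\<^sup>2"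
      using K_pos by (intro prob_abs_sum_gt_le) simp
    also have "\<dots> = C / K\<^sup>2"
      using False by (simp add: power_mult_distrib)
    finally show ?thesis using C_lt by linarith
  qed
qed

lemma weak_law_of_large_numbers:
  assumes \<delta>: "\<delta> > 0"
  shows "(\<lambda>N. prob {\<omega> \<in> space M. \<delta> * real N < \<bar>\<Sum>i<N. Z i \<omega>\<bar>}) \<longlonglongrightarrow> 0"
proof (rule tendsto_sandwich[OF _ _ tendsto_const])
  show "(\<lambda>N. C / \<delta>\<^sup>2 / real N) \<longlonglongrightarrow> 0"
    by (rule lim_const_over_n)
  show "\<forall>\<^sub>F N in sequentially. prob {\<omega> \<in> space M. \<delta> * real N < \<bar>\<Sum>i<N. Z i \<omega>\<bar>} \<le> C / \<delta>\<^sup>2 / real N"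
  proof (rule eventually_sequentiallyI[of 1])
    fix N :: nat assume "1 \<le> N"
    then have "prob {\<omega> \<in> space M. \<delta> * real N < \<bar>\<Sum>i<N. Z i \<omega>\<bar>} \<le> real N * C / (\<delta> * real N)\<^sup>2"
      using \<delta> by (intro prob_abs_sum_gt_le) simp
    also have "\<dots> = C / \<delta>\<^sup>2 / real N"
      using \<open>1 \<le> N\<close> by (simp add: power2_eq_square field_simps)
    finally show "prob {\<omega> \<in> space M. \<delta> * real N < \<bar>\<Sum>i<N. Z i \<omega>\<bar>} \<le> C / \<delta>\<^sup>2 / real N" .
  qed
qed simp

end

lemma op1_cong:
  assumes "\<And>N \<omega>. \<omega> \<in> space M \<Longrightarrow> R N \<omega> = R' N \<omega>"
  shows "op1 M R \<longleftrightarrow> op1 M R'"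
proof -
  have "{\<omega> \<in> space M. e < norm (R N \<omega>)} = {\<omega> \<in> space M. e < norm (R' N \<omega>)}" for e N
    using assms by auto
  then show ?thesis
    unfolding op1_def by simp
qed

lemma (in prob_space) op1_componentwise:
  fixes R :: "nat \<Rightarrow> 'a \<Rightarrow> real ^ 'n"
  assumes [measurable]: "\<And>N j. (\<lambda>\<omega>. R N \<omega> $ j) \<in> borel_measurable M"
    and components: "\<And>j. op1 M (\<lambda>N \<omega>. R N \<omega> $ j)"
  shows "op1 M R"
  unfolding op1_def
proof (intro allI impI)
  fix e :: real assume e: "e > 0"
  define c where "c = e / real CARD('n)"
  have c: "c > 0"
    unfolding c_def using e by simp
  have union_bound: "prob {\<omega> \<in> space M. e < norm (R N \<omega>)} \<le> (\<Sum>j\<in>UNIV. prob {\<omega> \<in> space M. c < \<bar>R N \<omega> $ j\<bar>})" for N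
  proof -
    have "{\<omega> \<in> space M. e < norm (R N \<omega>)} \<subseteq> (\<Union>j. {\<omega> \<in> space M. c < \<bar>R N \<omega> $ j\<bar>})"
    proof (rule subsetI, rule ccontr)
      fix \<omega> assume \<omega>: "\<omega> \<in> {\<omega> \<in> space M. e < norm (R N \<omega>)}"
        and "\<omega> \<notin> (\<Union>j. {\<omega> \<in> space M. c < \<bar>R N \<omega> $ j\<bar>})"
      then have "\<bar>R N \<omega> $ j\<bar> \<le> c" for j
        by (simp add: not_less)
      then have "(\<Sum>j\<in>UNIV. \<bar>R N \<omega> $ j\<bar>) \<le> (\<Sum>j\<in>(UNIV :: 'n set). c)"
        by (intro sum_mono)
      also have "\<dots> = e"
        unfolding c_def by simp
      finally show False
        using \<omega> norm_le_l1_cart[of "R N \<omega>"] by simp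
    qed
    then have "prob {\<omega> \<in> space M. e < norm (R N \<omega>)} \<le> prob (\<Union>j. {\<omega> \<in> space M. c < \<bar>R N \<omega> $ j\<bar>})"
      by (intro finite_measure_mono) auto
    also have "\<dots> \<le> (\<Sum>j\<in>UNIV. prob {\<omega> \<in> space M. c < \<bar>R N \<omega> $ j\<bar>})"
      by (intro measure_subadditive_finite) auto
    finally show ?thesis .
  qed
  have lim: "(\<lambda>N. \<Sum>j\<in>UNIV. prob {\<omega> \<in> space M. c < \<bar>R N \<omega> $ j\<bar>}) \<longlonglongrightarrow> 0"
    using components c unfolding op1_def by (intro tendsto_null_sum) auto
  show "(\<lambda>N. prob {\<omega> \<in> space M. e < norm (R N \<omega>)}) \<longlonglongrightarrow> 0"
    by (rule tendsto_sandwich[OF _ _ tendsto_const lim]) (simp_all add: union_bound)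
qed

lemma (in prob_space) prob_ratio_remainder_gt_le:
  fixes S D R :: "nat \<Rightarrow> 'a \<Rightarrow> real"
  assumes [measurable]: "S N \<in> borel_measurable M" "D N \<in> borel_measurable M"
    and N: "N > 0" and \<rho>: "\<rho> > 0" and \<delta>: "\<delta> \<le> \<rho> / 2" and e: "2 * K * \<delta> / \<rho>\<^sup>2 < e"
    and R_eq: "\<And>\<omega>. \<omega> \<in> space M \<Longrightarrow> D N \<omega> + real N * \<rho> > 0 \<Longrightarrow>
      R N \<omega> = sqrt (real N) * (S N \<omega> / (D N \<omega> + real N * \<rho>)) - S N \<omega> / (sqrt (real N) * \<rho>)"
  shows "prob {\<omega> \<in> space M. e < \<bar>R N \<omega>\<bar>}
    \<le> prob {\<omega> \<in> space M. K * sqrt (real N) < \<bar>S N \<omega>\<bar>} + prob {\<omega> \<in> space M. \<delta> * real N < \<bar>D N \<omega>\<bar>}"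
    (is "prob ?E \<le> prob ?A + prob ?B")
proof -
  have "?E \<subseteq> ?A \<union> ?B"
  proof (rule subsetI, rule ccontr)
    fix \<omega> assume \<omega>: "\<omega> \<in> ?E" and "\<omega> \<notin> ?A \<union> ?B"
    then have "\<bar>S N \<omega>\<bar> \<le> K * sqrt (real N)" "\<bar>D N \<omega>\<bar> \<le> \<delta> * real N"
      by auto
    moreover have "real N > 0"
      using N by simp
    ultimately have bounds: "real N > 0" "\<rho> > 0" "\<bar>S N \<omega>\<bar> \<le> K * sqrt (real N)"
      "\<bar>D N \<omega>\<bar> \<le> \<delta> * real N" "\<delta> \<le> \<rho> / 2"
      using \<rho> \<delta> by simp_all
    have "\<bar>R N \<omega>\<bar> \<le> 2 * K * \<delta> / \<rho>\<^sup>2"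
      using R_eq[OF _ ratio_denominator_pos[OF bounds]] ratio_remainder_le[OF bounds] \<omega> by simp
    then show False
      using \<omega> e by simp
  qed
  then have "prob ?E \<le> prob (?A \<union> ?B)"
    by (intro finite_measure_mono) simp_all
  also have "\<dots> \<le> prob ?A + prob ?B"
    by (intro measure_subadditive) simp_all
  finally show ?thesis .
qed

lemma (in prob_space) ratio_remainder_op1:
  fixes S D R :: "nat \<Rightarrow> 'a \<Rightarrow> real"
  assumes [measurable]: "\<And>N. S N \<in> borel_measurable M" "\<And>N. D N \<in> borel_measurable M"
    and S_bounded: "\<And>r. r > 0 \<Longrightarrow> \<exists>K>0. \<forall>N. prob {\<omega> \<in> space M. K * sqrt (real N) < \<bar>S N \<omega>\<bar>} < r"
    and D_small: "\<And>\<delta>. \<delta> > 0 \<Longrightarrow> (\<lambda>N. prob {\<omega> \<in> space M. \<delta> * real N < \<bar>D N \<omega>\<bar>}) \<longlonglongrightarrow> 0"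
    and \<rho>: "\<rho> > 0"
    and R_eq: "\<And>N \<omega>. \<omega> \<in> space M \<Longrightarrow> D N \<omega> + real N * \<rho> > 0 \<Longrightarrow>
      R N \<omega> = sqrt (real N) * (S N \<omega> / (D N \<omega> + real N * \<rho>)) - S N \<omega> / (sqrt (real N) * \<rho>)"
  shows "op1 M R"
  unfolding op1_def real_norm_def
proof (intro allI impI LIMSEQ_I)
  fix e r :: real assume e: "e > 0" and r: "r > 0"
  obtain K where K: "K > 0" and S_le: "\<And>N. prob {\<omega> \<in> space M. K * sqrt (real N) < \<bar>S N \<omega>\<bar>} < r / 2"
    using S_bounded[of "r / 2"] r by auto
  define \<delta> where "\<delta> = min (\<rho> / 2) (e * \<rho>\<^sup>2 / (4 * K))"
  have \<delta>: "\<delta> > 0" "\<delta> \<le> \<rho> / 2" "2 * K * \<delta> / \<rho>\<^sup>2 \<le> e / 2"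
    using K e \<rho> by (auto simp: \<delta>_def field_simps min_def)
  then have remainder_lt: "2 * K * \<delta> / \<rho>\<^sup>2 < e"
    using e by linarith
  obtain N0 where D_le: "\<And>N. N \<ge> N0 \<Longrightarrow> prob {\<omega> \<in> space M. \<delta> * real N < \<bar>D N \<omega>\<bar>} < r / 2"
    using LIMSEQ_D[OF D_small[OF \<open>\<delta> > 0\<close>], of "r / 2"] r by auto
  have "prob {\<omega> \<in> space M. e < \<bar>R N \<omega>\<bar>} < r" if "N \<ge> Suc N0" for N
    using prob_ratio_remainder_gt_le[of S N D \<rho> \<delta> K e R] R_eq \<rho> \<delta>(2) remainder_lt S_le[of N] D_le[of N] that
    by simp
  then show "\<exists>N0. \<forall>N\<ge>N0. norm (prob {\<omega> \<in> space M. e < \<bar>R N \<omega>\<bar>} - 0) < r"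
    by auto
qed

lemma indep_rv_compose:
  fixes A :: "'a \<Rightarrow> 'b::topological_space" and B :: "'a \<Rightarrow> 'c::topological_space"
    and f :: "'b \<Rightarrow> 'd::topological_space" and g :: "'c \<Rightarrow> 'e::topological_space"
  assumes "indep_rv M A B" "f \<in> borel_measurable borel" "g \<in> borel_measurable borel"
  shows "indep_rv M (\<lambda>\<omega>. f (A \<omega>)) (\<lambda>\<omega>. g (B \<omega>))"
  unfolding indep_rv_def
proof (intro conjI ballI)
  show "(\<lambda>\<omega>. f (A \<omega>)) \<in> borel_measurable M" "(\<lambda>\<omega>. g (B \<omega>)) \<in> borel_measurable M"
    using assms unfolding indep_rv_def by (auto intro: measurable_compose)
  fix S :: "'d set" and T :: "'e set" assume "S \<in> sets borel" "T \<in> sets borel"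
  then have "f -` S \<in> sets borel" "g -` T \<in> sets borel"
    using assms(2,3) by (auto intro: measurable_sets_borel)
  then have "measure M {\<omega> \<in> space M. A \<omega> \<in> f -` S \<and> B \<omega> \<in> g -` T}
    = measure M {\<omega> \<in> space M. A \<omega> \<in> f -` S} * measure M {\<omega> \<in> space M. B \<omega> \<in> g -` T}"
    using assms(1) unfolding indep_rv_def by blast
  then show "measure M {\<omega> \<in> space M. f (A \<omega>) \<in> S \<and> g (B \<omega>) \<in> T}
    = measure M {\<omega> \<in> space M. f (A \<omega>) \<in> S} * measure M {\<omega> \<in> space M. g (B \<omega>) \<in> T}"
    by simp
qed

lemma (in prob_space) indep_rv_imp_indep_var:
  fixes A B :: "'a \<Rightarrow> 'b::topological_space"
  assumes "indep_rv M A B"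
  shows "indep_var borel A borel B"
proof -
  have A: "A \<in> borel_measurable M" and B: "B \<in> borel_measurable M"
    and product: "\<And>S T. S \<in> sets borel \<Longrightarrow> T \<in> sets borel \<Longrightarrow>
      prob {\<omega> \<in> space M. A \<omega> \<in> S \<and> B \<omega> \<in> T} = prob {\<omega> \<in> space M. A \<omega> \<in> S} * prob {\<omega> \<in> space M. B \<omega> \<in> T}"
    using assms unfolding indep_rv_def by auto
  have Int_stable: "Int_stable {X -` S \<inter> space M |S. S \<in> sets (borel :: 'd measure)}"
    for X :: "'a \<Rightarrow> 'd::topological_space"
  proof (safe intro!: Int_stableI)
    fix S T :: "'d set" assume "S \<in> sets borel" "T \<in> sets borel"
    then show "\<exists>U. (X -` S \<inter> space M) \<inter> (X -` T \<inter> space M) = X -` U \<inter> space M \<and> U \<in> sets borel"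
      by (intro exI[of _ "S \<inter> T"]) auto
  qed
  show ?thesis
    unfolding indep_var_eq
  proof (intro conjI indep_set_sigma_sets Int_stable A B)
    show "indep_set {A -` S \<inter> space M |S. S \<in> sets borel} {B -` T \<inter> space M |T. T \<in> sets borel}"
    proof (safe intro!: indep_setI)
      fix S T :: "'b set" assume S: "S \<in> sets borel" and T: "T \<in> sets borel"
      show "A -` S \<inter> space M \<in> events" "B -` T \<inter> space M \<in> events"
        using measurable_sets[OF A S] measurable_sets[OF B T] by auto
      have "(A -` S \<inter> space M) \<inter> (B -` T \<inter> space M) = {\<omega> \<in> space M. A \<omega> \<in> S \<and> B \<omega> \<in> T}"
        "A -` S \<inter> space M = {\<omega> \<in> space M. A \<omega> \<in> S}" "B -` T \<inter> space M = {\<omega> \<in> space M. B \<omega> \<in> T}"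
        by auto
      then show "prob ((A -` S \<inter> space M) \<inter> (B -` T \<inter> space M)) = prob (A -` S \<inter> space M) * prob (B -` T \<inter> space M)"
        using product[OF S T] by simp
    qed
  qed
qed

lemma (in prob_space)
  fixes X Y :: "'a \<Rightarrow> 'b::topological_space" and h :: "'b \<Rightarrow> real"
  assumes "distr M borel X = distr M borel Y"
    and "X \<in> borel_measurable M" "Y \<in> borel_measurable M" "h \<in> borel_measurable borel"
  shows identically_distributed_integrable_iff: "integrable M (\<lambda>\<omega>. h (X \<omega>)) \<longleftrightarrow> integrable M (\<lambda>\<omega>. h (Y \<omega>))"
    and identically_distributed_integral_eq: "(\<integral>\<omega>. h (X \<omega>) \<partial>M) = (\<integral>\<omega>. h (Y \<omega>) \<partial>M)"
  using integrable_distr_eq[of X M borel h] integrable_distr_eq[of Y M borel h]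
    integral_distr[of X M borel h] integral_distr[of Y M borel h] assms
  by simp_all

lemma (in prob_space) iid_compose:
  fixes V :: "nat \<Rightarrow> 'a \<Rightarrow> 'b::topological_space" and f :: "'b \<Rightarrow> 'c::topological_space"
  assumes indep: "indep_vars (\<lambda>_. borel) V UNIV"
    and ident: "\<And>i. distr M borel (V i) = distr M borel (V 0)"
    and f: "f \<in> borel_measurable borel"
  shows "indep_vars (\<lambda>_. borel) (\<lambda>i \<omega>. f (V i \<omega>)) UNIV"
    and "distr M borel (\<lambda>\<omega>. f (V i \<omega>)) = distr M borel (\<lambda>\<omega>. f (V 0 \<omega>))"
proof -
  show "indep_vars (\<lambda>_. borel) (\<lambda>i \<omega>. f (V i \<omega>)) UNIV"
    using indep_vars_compose2[OF indep, of "\<lambda>_. f"] f by simp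
  have "V j \<in> borel_measurable M" for j
    using indep unfolding indep_vars_def by simp
  then have "distr M borel (\<lambda>\<omega>. f (V j \<omega>)) = distr (distr M borel (V j)) borel f" for j
    by (simp add: distr_distr[OF f] comp_def)
  then show "distr M borel (\<lambda>\<omega>. f (V i \<omega>)) = distr M borel (\<lambda>\<omega>. f (V 0 \<omega>))"
    using ident[of i] by simp
qed

lemma (in prob_space) iid_centered_orthogonal_sequence:
  fixes Z :: "nat \<Rightarrow> 'a \<Rightarrow> real"
  assumes indep: "indep_vars (\<lambda>_. borel) Z UNIV"
    and ident: "\<And>i. distr M borel (Z i) = distr M borel (Z 0)"
    and square: "integrable M (\<lambda>\<omega>. (Z 0 \<omega>)\<^sup>2)"
    and centered: "expectation (Z 0) = 0"
  shows "orthogonal_sequence M Z (expectation (\<lambda>\<omega>. (Z 0 \<omega>)\<^sup>2))"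
proof
  have Z [measurable]: "Z i \<in> borel_measurable M" for i
    using indep unfolding indep_vars_def by simp
  note transfer = identically_distributed_integrable_iff[OF ident Z Z]
    identically_distributed_integral_eq[OF ident Z Z]
  show "Z i \<in> borel_measurable M" for i
    by (rule Z)
  show square_i: "integrable M (\<lambda>\<omega>. (Z i \<omega>)\<^sup>2)" for i
    using transfer(1)[of "\<lambda>z. z\<^sup>2" i] square by simp
  show "(\<integral>\<omega>. (Z i \<omega>)\<^sup>2 \<partial>M) \<le> expectation (\<lambda>\<omega>. (Z 0 \<omega>)\<^sup>2)" for i
    using transfer(2)[of "\<lambda>z. z\<^sup>2" i] by simp
  have integrable_i: "integrable M (Z i)" for i
    using square_integrable_imp_integrable[OF Z square_i] .
  have centered_i: "expectation (Z i) = 0" for i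
    using transfer(2)[of "\<lambda>z. z" i] centered by simp
  fix i j :: nat assume "i \<noteq> j"
  moreover have "indep_vars (\<lambda>_. borel) Z {i, j}"
    using indep by (rule indep_vars_subset) simp
  ultimately have "(\<integral>\<omega>. (\<Prod>k\<in>{i, j}. Z k \<omega>) \<partial>M) = (\<Prod>k\<in>{i, j}. expectation (Z k))"
    using integrable_i by (intro indep_vars_lebesgue_integral) auto
  then show "(\<integral>\<omega>. Z i \<omega> * Z j \<omega> \<partial>M) = 0"
    using \<open>i \<noteq> j\<close> centered_i by simp
qed

lemma (in prob_space) expectation_zero_one_valued:
  assumes "\<And>\<omega>. \<omega> \<in> space M \<Longrightarrow> A \<omega> \<in> {0, 1}"
  shows "expectation A = prob {\<omega> \<in> space M. A \<omega> = 1}"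
proof -
  have "expectation A = expectation (indicator {\<omega> \<in> space M. A \<omega> = 1})"
    using assms by (intro Bochner_Integration.integral_cong) (auto simp: indicator_def)
  then show ?thesis
    by (simp add: Collect_conj_eq Int_ac)
qed

lemma (in prob_space)
  fixes A :: "'a \<Rightarrow> real"
  defines "\<rho> \<equiv> prob {\<omega> \<in> space M. A \<omega> = 1}"
  assumes [measurable]: "A \<in> borel_measurable M" and A01: "\<And>\<omega>. \<omega> \<in> space M \<Longrightarrow> A \<omega> \<in> {0, 1}"
  shows integrable_zero_one_valued: "integrable M A"
    and integrable_square_zero_one_centered: "integrable M (\<lambda>\<omega>. (A \<omega> - \<rho>)\<^sup>2)"
    and expectation_zero_one_centered: "expectation (\<lambda>\<omega>. A \<omega> - \<rho>) = 0"
proof -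
  have A_cases: "A \<omega> = 0 \<or> A \<omega> = 1" if "\<omega> \<in> space M" for \<omega>
    using A01[OF that] by simp
  have "0 \<le> \<rho>" "\<rho> \<le> 1"
    unfolding \<rho>_def by simp_all
  then have A_bounds: "\<bar>A \<omega> - \<rho>\<bar> \<le> 1" "\<bar>A \<omega>\<bar> \<le> 1" if "\<omega> \<in> space M" for \<omega>
    using A_cases[OF that] by auto
  show A_integrable: "integrable M A"
  proof (rule integrable_const_bound[where B = 1])
    show "AE \<omega> in M. norm (A \<omega>) \<le> 1"
      using A_bounds(2) by (intro AE_I2) simp
  qed simp
  show "integrable M (\<lambda>\<omega>. (A \<omega> - \<rho>)\<^sup>2)"
  proof (rule integrable_const_bound[where B = 1])
    show "AE \<omega> in M. norm ((A \<omega> - \<rho>)\<^sup>2) \<le> 1"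
      using A_bounds(1) by (intro AE_I2) (simp add: abs_square_le_1)
  qed simp
  have "expectation A = \<rho>"
    unfolding \<rho>_def by (rule expectation_zero_one_valued) (rule A01)
  then show "expectation (\<lambda>\<omega>. A \<omega> - \<rho>) = 0"
    using A_integrable by (simp add: prob_space)
qed

lemma (in prob_space)
  fixes A Z :: "'a \<Rightarrow> real"
  defines "\<mu> \<equiv> expectation Z"
  assumes [measurable]: "A \<in> borel_measurable M" "Z \<in> borel_measurable M"
    and A01: "\<And>\<omega>. \<omega> \<in> space M \<Longrightarrow> A \<omega> \<in> {0, 1}"
    and indep: "indep_var borel A borel Z"
    and Z_square: "integrable M (\<lambda>\<omega>. (Z \<omega>)\<^sup>2)"
  shows integrable_square_zero_one_weighted: "integrable M (\<lambda>\<omega>. (A \<omega> * (Z \<omega> - \<mu>))\<^sup>2)"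
    and expectation_zero_one_weighted: "expectation (\<lambda>\<omega>. A \<omega> * (Z \<omega> - \<mu>)) = 0"
proof -
  have A_cases: "A \<omega> = 0 \<or> A \<omega> = 1" if "\<omega> \<in> space M" for \<omega>
    using A01[OF that] by simp
  have Z_integrable: "integrable M Z"
    by (rule square_integrable_imp_integrable[OF _ Z_square]) simp
  have "integrable M (\<lambda>\<omega>. (Z \<omega> - \<mu>)\<^sup>2)"
    unfolding power2_diff using Z_square Z_integrable by simp
  then show "integrable M (\<lambda>\<omega>. (A \<omega> * (Z \<omega> - \<mu>))\<^sup>2)"
  proof (rule Bochner_Integration.integrable_bound)
    show "AE \<omega> in M. norm ((A \<omega> * (Z \<omega> - \<mu>))\<^sup>2) \<le> norm ((Z \<omega> - \<mu>)\<^sup>2)"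
    proof (rule AE_I2)
      fix \<omega> assume "\<omega> \<in> space M"
      then have "A \<omega> \<in> {0, 1}"
        by (rule A01)
      then show "norm ((A \<omega> * (Z \<omega> - \<mu>))\<^sup>2) \<le> norm ((Z \<omega> - \<mu>)\<^sup>2)"
        by auto
    qed
  qed simp
  have "indep_var borel A borel (\<lambda>\<omega>. Z \<omega> - \<mu>)"
    using indep_var_compose[OF indep, of id borel "\<lambda>z. z - \<mu>" borel] by (simp add: comp_def)
  then have "expectation (\<lambda>\<omega>. A \<omega> * (Z \<omega> - \<mu>)) = expectation A * expectation (\<lambda>\<omega>. Z \<omega> - \<mu>)"
    using integrable_zero_one_valued[of A, OF _ A01] Z_integrable by (intro indep_var_lebesgue_integral) simp_all
  then show "expectation (\<lambda>\<omega>. A \<omega> * (Z \<omega> - \<mu>)) = 0"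
    using Z_integrable by (simp add: \<mu>_def prob_space)
qed

lemma (in prob_space) subsample_mean_asymptotically_linear:
  fixes A Z :: "nat \<Rightarrow> 'a \<Rightarrow> real"
  defines "\<rho> \<equiv> prob {\<omega> \<in> space M. A 0 \<omega> = 1}" and "\<mu> \<equiv> expectation (Z 0)"
  assumes indep: "indep_vars (\<lambda>_. borel) (\<lambda>i \<omega>. (A i \<omega>, Z i \<omega>)) UNIV"
    and ident: "\<And>i. distr M borel (\<lambda>\<omega>. (A i \<omega>, Z i \<omega>)) = distr M borel (\<lambda>\<omega>. (A 0 \<omega>, Z 0 \<omega>))"
    and A01: "\<And>i \<omega>. \<omega> \<in> space M \<Longrightarrow> A i \<omega> \<in> {0, 1}"
    and \<rho>_pos: "\<rho> > 0"
    and indep_AZ: "indep_var borel (A 0) borel (Z 0)"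
    and Z_square: "integrable M (\<lambda>\<omega>. (Z 0 \<omega>)\<^sup>2)"
  shows "op1 M (\<lambda>N \<omega>. sqrt (real N) * ((\<Sum>i<N. A i \<omega> * Z i \<omega>) / (\<Sum>i<N. A i \<omega>) - \<mu>)
                      - (\<Sum>i<N. A i \<omega> * (Z i \<omega> - \<mu>)) / (sqrt (real N) * \<rho>))"
proof -
  define V where "V = (\<lambda>i \<omega>. A i \<omega> * (Z i \<omega> - \<mu>))"
  define D where "D = (\<lambda>i \<omega>. A i \<omega> - \<rho>)"
  have pair_measurable: "(\<lambda>\<omega>. (A i \<omega>, Z i \<omega>)) \<in> borel_measurable M" for i
    using indep unfolding indep_vars_def by simp
  have [measurable]: "A i \<in> borel_measurable M" "Z i \<in> borel_measurable M" for i
    using measurable_compose[OF pair_measurable[of i] measurable_fst[of "borel :: real measure" "borel :: real measure", unfolded borel_prod]]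
      measurable_compose[OF pair_measurable[of i] measurable_snd[of "borel :: real measure" "borel :: real measure", unfolded borel_prod]]
    by simp_all
  have [measurable]: "(\<lambda>(a, z). a * (z - \<mu>)) \<in> borel_measurable (borel :: (real \<times> real) measure)"
    "(\<lambda>(a, z). a - \<rho>) \<in> borel_measurable (borel :: (real \<times> real) measure)"
    unfolding case_prod_beta by (intro borel_measurable_continuous_onI continuous_intros)+
  interpret V: orthogonal_sequence M V "expectation (\<lambda>\<omega>. (V 0 \<omega>)\<^sup>2)"
    using iid_compose[OF indep ident, of "\<lambda>(a, z). a * (z - \<mu>)"]
      integrable_square_zero_one_weighted[where A = "A 0" and Z = "Z 0", OF _ _ A01 indep_AZ Z_square, folded \<mu>_def]
      expectation_zero_one_weighted[where A = "A 0" and Z = "Z 0", OF _ _ A01 indep_AZ Z_square, folded \<mu>_def]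
    by (intro iid_centered_orthogonal_sequence) (simp_all add: V_def)
  interpret D: orthogonal_sequence M D "expectation (\<lambda>\<omega>. (D 0 \<omega>)\<^sup>2)"
    using iid_compose[OF indep ident, of "\<lambda>(a, z). a - \<rho>"]
      integrable_square_zero_one_centered[where A = "A 0", OF _ A01, folded \<rho>_def]
      expectation_zero_one_centered[where A = "A 0", OF _ A01, folded \<rho>_def]
    by (intro iid_centered_orthogonal_sequence) (simp_all add: D_def)
  show ?thesis
  proof (rule ratio_remainder_op1)
    show "(\<lambda>\<omega>. \<Sum>i<N. V i \<omega>) \<in> borel_measurable M" "(\<lambda>\<omega>. \<Sum>i<N. D i \<omega>) \<in> borel_measurable M" for N
      by (simp_all add: V_def D_def)
    fix N \<omega> assume "(\<Sum>i<N. D i \<omega>) + real N * \<rho> > 0"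
    moreover have "(\<Sum>i<N. D i \<omega>) + real N * \<rho> = (\<Sum>i<N. A i \<omega>)"
      by (simp add: D_def sum_subtractf)
    moreover have "(\<Sum>i<N. V i \<omega>) = (\<Sum>i<N. A i \<omega> * Z i \<omega>) - \<mu> * (\<Sum>i<N. A i \<omega>)"
      by (simp add: V_def algebra_simps sum_subtractf sum_distrib_left)
    ultimately show "sqrt (real N) * ((\<Sum>i<N. A i \<omega> * Z i \<omega>) / (\<Sum>i<N. A i \<omega>) - \<mu>)
        - (\<Sum>i<N. A i \<omega> * (Z i \<omega> - \<mu>)) / (sqrt (real N) * \<rho>)
      = sqrt (real N) * ((\<Sum>i<N. V i \<omega>) / ((\<Sum>i<N. D i \<omega>) + real N * \<rho>))
        - (\<Sum>i<N. V i \<omega>) / (sqrt (real N) * \<rho>)"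
      by (simp add: V_def diff_divide_distrib)
  qed (use V.sum_bounded_in_probability D.weak_law_of_large_numbers \<rho>_pos in auto)
qed

lemma one_hot_select:
  fixes w y :: "real ^ 'n"
  assumes w01: "\<And>h. w $ h \<in> {0, 1}" and w_sum: "(\<Sum>h\<in>UNIV. w $ h) = 1"
  shows "w $ g * (\<Sum>h\<in>UNIV. w $ h * y $ h) = w $ g * y $ g"
proof (cases "w $ g = 0")
  case False
  then have w_g: "w $ g = 1"
    using w01[of g] by auto
  have "(\<Sum>h\<in>UNIV - {g}. w $ h) = 0"
    using w_sum w_g sum.remove[of UNIV g "\<lambda>h. w $ h"] by simp
  moreover have "w $ h \<ge> 0" for h
    using w01[of h] by auto
  ultimately have "w $ h = 0" if "h \<noteq> g" for h
    using that sum_nonneg_eq_0_iff[of "UNIV - {g}" "\<lambda>h. w $ h"] by simp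
  then have "(\<Sum>h\<in>UNIV. w $ h * y $ h) = y $ g"
    using w_g sum.remove[of UNIV g "\<lambda>h. w $ h * y $ h"] by simp
  then show ?thesis
    by simp
qed simp

theorem theorem1:
  fixes M :: "'a measure"
    and W :: "nat \<Rightarrow> 'a \<Rightarrow> real ^ 'g"
    and Y :: "nat \<Rightarrow> 'a \<Rightarrow> real ^ 'g"
    and X :: "nat \<Rightarrow> 'a \<Rightarrow> real ^ 'k"
    and \<beta> :: "'g \<Rightarrow> real ^ 'k"
  assumes P: "prob_space M"
    and G2: "CARD('g) \<ge> 2"
    and meas: "\<And>i. (\<lambda>\<omega>. (W i \<omega>, Y i \<omega>, X i \<omega>)) \<in> borel_measurable M"
    and W01: "\<And>i g \<omega>. \<omega> \<in> space M \<Longrightarrow> W i \<omega> $ g \<in> {0, 1}"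
    and Wsum: "\<And>i \<omega>. \<omega> \<in> space M \<Longrightarrow> (\<Sum>g\<in>UNIV. W i \<omega> $ g) = 1"
    and rho_pos: "\<And>g. measure M {\<omega> \<in> space M. W 0 \<omega> $ g = 1} > 0"
    and rand_assign: "indep_rv M (W 0) (\<lambda>\<omega>. (Y 0 \<omega>, X 0 \<omega>))"
    and indep: "prob_space.indep_vars M (\<lambda>_. borel) (\<lambda>i \<omega>. (W i \<omega>, Y i \<omega>, X i \<omega>)) UNIV"
    and ident: "\<And>i. distr M borel (\<lambda>\<omega>. (W i \<omega>, Y i \<omega>, X i \<omega>))
                    = distr M borel (\<lambda>\<omega>. (W 0 \<omega>, Y 0 \<omega>, X 0 \<omega>))"
    and Y2: "\<And>g. integrable M (\<lambda>\<omega>. (Y 0 \<omega> $ g)\<^sup>2)"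
    and X2: "\<And>k. integrable M (\<lambda>\<omega>. (X 0 \<omega> $ k)\<^sup>2)"
    and beta: "\<And>g. is_lin_proj_coef M
                 (\<lambda>\<omega>. Y 0 \<omega> $ g - integral\<^sup>L M (\<lambda>\<omega>'. Y 0 \<omega>' $ g))
                 (\<lambda>\<omega>. X 0 \<omega> - vec_expectation M (X 0)) (\<beta> g)"
  shows "let \<rho> = (\<lambda>g. measure M {\<omega> \<in> space M. W 0 \<omega> $ g = 1});
             \<mu> = (\<chi> g. integral\<^sup>L M (\<lambda>\<omega>. Y 0 \<omega> $ g));
             \<mu>X = vec_expectation M (X 0);
             Xd = (\<lambda>i \<omega>. X i \<omega> - \<mu>X);
             U = (\<lambda>i g \<omega>. Y i \<omega> $ g - \<mu> $ g - Xd i \<omega> \<bullet> \<beta> g);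
             Yobs = (\<lambda>i \<omega>. \<Sum>g\<in>UNIV. W i \<omega> $ g * Y i \<omega> $ g);
             Ng = (\<lambda>N g \<omega>. \<Sum>i<N. W i \<omega> $ g);
             Ybar = (\<lambda>N \<omega>. \<chi> g. (\<Sum>i<N. W i \<omega> $ g * Yobs i \<omega>) / Ng N g \<omega>);
             L = (\<lambda>i \<omega>. \<chi> g. W i \<omega> $ g * (Xd i \<omega> \<bullet> \<beta> g) / \<rho> g);
             Q = (\<lambda>i \<omega>. \<chi> g. W i \<omega> $ g * U i g \<omega> / \<rho> g)
         in op1 M (\<lambda>N \<omega>. sqrt (real N) *\<^sub>R (Ybar N \<omega> - \<mu>)
                         - (1 / sqrt (real N)) *\<^sub>R (\<Sum>i<N. L i \<omega> + Q i \<omega>))"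
proof -
  interpret prob_space M
    by (rule P)
  have coordinates:
    "(\<lambda>v :: (real ^ 'g) \<times> (real ^ 'g) \<times> (real ^ 'k). fst v $ h) \<in> borel_measurable borel"
    "(\<lambda>v :: (real ^ 'g) \<times> (real ^ 'g) \<times> (real ^ 'k). fst (snd v) $ h) \<in> borel_measurable borel"
    "(\<lambda>v :: (real ^ 'g) \<times> (real ^ 'g) \<times> (real ^ 'k). snd (snd v)) \<in> borel_measurable borel" for h
    by (intro borel_measurable_continuous_onI continuous_intros)+
  have [measurable]: "(\<lambda>\<omega>. W i \<omega> $ h) \<in> borel_measurable M" "(\<lambda>\<omega>. Y i \<omega> $ h) \<in> borel_measurable M"
    "X i \<in> borel_measurable M" for i h
    using measurable_compose[OF meas coordinates(1)] measurable_compose[OF meas coordinates(2)]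
      measurable_compose[OF meas coordinates(3)]
    by simp_all
  have arm: "op1 M (\<lambda>N \<omega>. sqrt (real N) * ((\<Sum>i<N. W i \<omega> $ g * Y i \<omega> $ g) / (\<Sum>i<N. W i \<omega> $ g)
        - expectation (\<lambda>\<omega>. Y 0 \<omega> $ g))
      - (\<Sum>i<N. W i \<omega> $ g * (Y i \<omega> $ g - expectation (\<lambda>\<omega>. Y 0 \<omega> $ g)))
        / (sqrt (real N) * prob {\<omega> \<in> space M. W 0 \<omega> $ g = 1}))" for g
  proof (rule subsample_mean_asymptotically_linear)
    have "(\<lambda>(w, y, x :: real ^ 'k). (w $ g, y $ g)) \<in> borel_measurable borel"
      unfolding case_prod_beta by (intro borel_measurable_continuous_onI continuous_intros)
    from iid_compose[OF indep ident this]
    show "indep_vars (\<lambda>_. borel) (\<lambda>i \<omega>. (W i \<omega> $ g, Y i \<omega> $ g)) UNIV"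
      and "distr M borel (\<lambda>\<omega>. (W i \<omega> $ g, Y i \<omega> $ g)) = distr M borel (\<lambda>\<omega>. (W 0 \<omega> $ g, Y 0 \<omega> $ g))" for i
      by simp_all
    have "(\<lambda>w :: real ^ 'g. w $ g) \<in> borel_measurable borel"
      "(\<lambda>(y :: real ^ 'g, x :: real ^ 'k). y $ g) \<in> borel_measurable borel"
      unfolding case_prod_beta by (intro borel_measurable_continuous_onI continuous_intros)+
    from indep_rv_compose[OF rand_assign this]
    have "indep_rv M (\<lambda>\<omega>. W 0 \<omega> $ g) (\<lambda>\<omega>. Y 0 \<omega> $ g)"
      by simp
    then show "indep_var borel (\<lambda>\<omega>. W 0 \<omega> $ g) borel (\<lambda>\<omega>. Y 0 \<omega> $ g)"
      by (rule indep_rv_imp_indep_var)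
  qed (use W01 rho_pos Y2 in auto)
  have select: "W i \<omega> $ g * (\<Sum>h\<in>UNIV. W i \<omega> $ h * Y i \<omega> $ h) = W i \<omega> $ g * Y i \<omega> $ g"
    if "\<omega> \<in> space M" for i g \<omega>
    using W01 Wsum that by (intro one_hot_select)
  have L_plus_Q: "w * d / r + w * (y - m - d) / r = w * (y - m) / r" for w d y m r :: real
    by (simp add: add_divide_distrib[symmetric] algebra_simps)
  show ?thesis
    unfolding Let_def
  proof (rule op1_componentwise, goal_cases)
    case 1
    show ?case by simp
  next
    case (2 g)
    show ?case
      by (rule op1_cong[THEN iffD1, OF _ arm[of g]])
        (simp add: select L_plus_Q sum_divide_distrib[symmetric])
  qed
qed

end
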